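(* Fix a frequency $\omega$ and let $\hat{\mathbf S}(\omega)$ be the multi-taper periodogram. Then for every pair $q,r\in\{1,\dots,p\}$ and every $\delta\in\bigl(0,\,80\max_{q'}S_{q'q'}(\omega)\bigr)$, $$\mathbb P\bigl\{|\hat S_{qr}(\omega)-S_{qr}(\omega)|\ge\delta\bigr\}\le 8\exp\Bigl\{-\frac{m\,\delta^2}{2^9\,5^2\,\max_{q'}\{S_{q'q'}(\omega)\}^2}\Bigr\}.$$
   Context: Let $\mathbf N(t)=(N_1(t),\dots,N_p(t))'$, $t\in(0,T]$, be a $p$-variate second-order stationary point process whose spectral density matrix at frequency $\omega$ is $\mathbf S(\omega)\in\mathbb C^{p\times p}$ (Hermitian positive definite). Fix an integer $m\ge1$ and non-overlapping tapers $h_k(z)=(m/(2\pi T))^{1/2}$ for $z\in((k-1)/m,k/m]$ and $h_k(z)=0$ otherwise ($k=1,\dots,m$, $z\in(0,1]$). Define $d_{k,q}(\omega)=\int_0^T h_k(t/T)e^{-i\omega t}\,dN_q(t)$, $H_k(\omega)=\int_0^1 h_k(z)e^{-i\omega z}dz$, the mean-corrected coefficient $\bar d_{k,q}(\omega)=d_{k,q}(\omega)-d_{k,q}(0)H_k(T\omega)/H_k(0)$, $\bar{\mathbf d}_k(\omega)=(\bar d_{k,1}(\omega),\dots,\bar d_{k,p}(\omega))'$, and the multi-taper periodogram $\hat{\mathbf S}(\omega)=m^{-1}\sum_{k=1}^m\bar{\mathbf d}_k(\omega)\bar{\mathbf d}_k(\omega)^H$. The statement is asymptotic as $T\to\infty$: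 precisely, it is understood under the limiting distributional model in which $\bar{\mathbf d}_1(\omega),\dots,\bar{\mathbf d}_m(\omega)$ are i.i.d. circularly symmetric complex Gaussian $\mathcal N_C(0,\mathbf S(\omega))$, i.e. $(\operatorname{Re}\bar{\mathbf d}_k,\operatorname{Im}\bar{\mathbf d}_k)$ is real Gaussian in $\mathbb R^{2p}$ with mean $0$ and covariance $\tfrac12\begin{pmatrix}\operatorname{Re}\mathbf S&-\operatorname{Im}\mathbf S\\ \operatorname{Im}\mathbf S&\operatorname{Re}\mathbf S\end{pmatrix}$. *)

theory Defs
  imports "HOL-Probability.Probability"
begin

definition herm_quad :: "complex^'p^'p \<Rightarrow> complex^'p \<Rightarrow> complex" where
  "herm_quad S c = (\<Sum>i\<in>UNIV. \<Sum>j\<in>UNIV. cnj (c$i) * S$i$j * c$j)"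

definition hermitian_pd :: "complex^'p^'p \<Rightarrow> bool" where
  "hermitian_pd S \<longleftrightarrow> (\<forall>i j. S$i$j = cnj (S$j$i)) \<and> (\<forall>c. c \<noteq> 0 \<longrightarrow> Re (herm_quad S c) > 0)"

text \<open>X is circularly symmetric complex Gaussian N_C(0,S): (Re X, Im X) is a real
  Gaussian vector with mean 0 and covariance 1/2 [[Re S, -Im S],[Im S, Re S]],
  expressed (Cramer-Wold) by: every nonzero real linear functional
  Re(c^H X) = Re c . Re X + Im c . Im X is normal with mean 0 and variance
  Re(c^H S c)/2.\<close>
definition circ_complex_gaussian :: "'a measure \<Rightarrow> ('a \<Rightarrow> complex^'p) \<Rightarrow> complex^'p^'p \<Rightarrow> bool" where
  "circ_complex_gaussian M X S \<longleftrightarrow> X \<in> borel_measurable M \<and>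
     (\<forall>c. c \<noteq> 0 \<longrightarrow>
        distributed M lborel (\<lambda>x. Re (\<Sum>j\<in>UNIV. cnj (c$j) * X x $ j))
          (normal_density 0 (sqrt (Re (herm_quad S c) / 2))))"

definition multitaper :: "nat \<Rightarrow> (nat \<Rightarrow> complex^'p) \<Rightarrow> complex^'p^'p" where
  "multitaper m d = (\<chi> q r. (\<Sum>k=1..m. d k $ q * cnj (d k $ r)) / of_nat m)"

end

theory Submission
  imports Defs
begin

(*
  hatS_qr - S_qr is the mean of the m independent centred terms Y_k = d_kq cnj(d_kr) - S_qr.
  By polarization, Re (w Y_k) is a difference of two centred squared moduli |c^H d_k|^2, and
  |c^H d_k|^2 is the sum of the squares of two centred real Gaussians of variance c^H S c / 2.
  The chi-square moment generating function E exp(t (G^2 - v)) = exp(-t v) / sqrt(1 - 2 t v),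
  which is at most exp(4 t^2 v^2) for |t| v <= 1/4, together with convexity of exp gives
  E exp(t Re (w Y_k)) <= exp(16 t^2 sigma^2) for sigma = max_q S_qq and 8 |t| sigma <= 1.
  A Chernoff bound over the independent tapers with t = delta / (640 sigma^2), admissible
  precisely because delta < 80 sigma, then controls each of the four half-planes
  Re (w (hatS_qr - S_qr)) >= delta/2, w in {1, -1, i, -i}, which cover |hatS_qr - S_qr| >= delta.
*)

(* Variance v, where v = 0 is the point mass at 0: the functional Re(c^H X) vanishes for c = 0. *)
definition centered_gaussian :: "'a measure \<Rightarrow> ('a \<Rightarrow> real) \<Rightarrow> real \<Rightarrow> bool" where
  "centered_gaussian M G v \<longleftrightarrow>
     (v = 0 \<and> (\<forall>x\<in>space M. G x = 0)) \<or> (v > 0 \<and> distributed M lborel G (normal_density 0 (sqrt v)))"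

lemma normal_density_mult_exp_square:
  fixes s \<theta> y :: real
  assumes "s > 0" and a: "1 - 2 * \<theta> * s\<^sup>2 > 0"
  shows "normal_density 0 s y * exp (\<theta> * y\<^sup>2) =
     1 / sqrt (1 - 2 * \<theta> * s\<^sup>2) * normal_density 0 (s / sqrt (1 - 2 * \<theta> * s\<^sup>2)) y"
proof -
  define a where "a = 1 - 2 * \<theta> * s\<^sup>2"
  have "a > 0" using a a_def by simp
  have "exp (- y\<^sup>2 / (2 * s\<^sup>2)) * exp (\<theta> * y\<^sup>2) = exp (- y\<^sup>2 / (2 * (s / sqrt a)\<^sup>2))"
    using \<open>s > 0\<close> \<open>a > 0\<close> by (simp add: exp_add[symmetric] power_divide a_def field_simps)
  moreover have "sqrt (2 * pi * (s / sqrt a)\<^sup>2) = sqrt (2 * pi * s\<^sup>2) / sqrt a"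
    using \<open>a > 0\<close> by (simp add: power_divide real_sqrt_divide)
  ultimately show ?thesis
    using \<open>a > 0\<close> unfolding normal_density_def a_def[symmetric] by simp
qed

lemma nn_integral_exp_square_normal:
  assumes "distributed M lborel X (normal_density 0 s)" "s > 0" "2 * \<theta> * s\<^sup>2 < 1"
  shows "(\<integral>\<^sup>+x. exp (\<theta> * (X x)\<^sup>2) \<partial>M) = 1 / sqrt (1 - 2 * \<theta> * s\<^sup>2)"
proof -
  define s' where "s' = s / sqrt (1 - 2 * \<theta> * s\<^sup>2)"
  have "s' > 0" using assms(2,3) by (simp add: s'_def)
  have "(\<integral>\<^sup>+x. exp (\<theta> * (X x)\<^sup>2) \<partial>M) = (\<integral>\<^sup>+y. normal_density 0 s y * exp (\<theta> * y\<^sup>2) \<partial>lborel)"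
    by (subst distributed_nn_integral[OF assms(1), symmetric]) (simp_all add: ennreal_mult)
  also have "\<dots> = (\<integral>\<^sup>+y. ennreal (1 / sqrt (1 - 2 * \<theta> * s\<^sup>2)) * normal_density 0 s' y \<partial>lborel)"
    using assms(2,3) unfolding s'_def
    by (intro nn_integral_cong) (simp add: normal_density_mult_exp_square ennreal_mult[symmetric])
  also have "\<dots> = 1 / sqrt (1 - 2 * \<theta> * s\<^sup>2)"
    using \<open>s' > 0\<close>
    by (subst nn_integral_cmult)
       (simp_all add: nn_integral_eq_integral integrable_normal_density integral_normal_density)
  finally show ?thesis .
qed

lemma exp_neg_div_sqrt_le:
  fixes u :: real
  assumes "\<bar>u\<bar> \<le> 1/4"
  shows "exp (-u) / sqrt (1 - 2 * u) \<le> exp (4 * u\<^sup>2)"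
proof -
  have "\<bar>ln (1 + (-2 * u)) - (-2 * u)\<bar> \<le> 2 * (-2 * u)\<^sup>2"
    by (rule abs_ln_one_plus_x_minus_x_bound) (use assms in simp)
  hence ln_bound: "- 2 * u - 8 * u\<^sup>2 \<le> ln (1 - 2 * u)" by (simp add: power2_eq_square)
  have pos: "1 - 2 * u > 0" using assms by simp
  have "exp (- u - 4 * u\<^sup>2) \<le> exp (ln (1 - 2 * u) / 2)" using ln_bound by simp
  also have "\<dots> = sqrt (1 - 2 * u)"
    using pos by (simp add: sqrt_def root_powr_inverse powr_def)
  finally have "exp (- u - 4 * u\<^sup>2) * exp (4 * u\<^sup>2) \<le> sqrt (1 - 2 * u) * exp (4 * u\<^sup>2)"
    by (intro mult_right_mono) auto
  then show ?thesis using pos by (simp add: divide_le_eq exp_add[symmetric] mult.commute)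
qed

lemma centered_gaussian_mgf_square_le:
  assumes "prob_space M" "centered_gaussian M G v" "\<bar>\<theta>\<bar> * v \<le> 1/4"
  shows "(\<integral>\<^sup>+x. exp (\<theta> * ((G x)\<^sup>2 - v)) \<partial>M) \<le> exp (4 * \<theta>\<^sup>2 * v\<^sup>2)"
  using assms(2) unfolding centered_gaussian_def
proof
  assume "v = 0 \<and> (\<forall>x\<in>space M. G x = 0)"
  then show ?thesis
    using prob_space.emeasure_space_1[OF assms(1)] by (simp add: nn_integral_cong[where v = "\<lambda>_. 1"])
next
  assume v: "v > 0 \<and> distributed M lborel G (normal_density 0 (sqrt v))"
  have u: "\<bar>\<theta> * v\<bar> \<le> 1/4" using v assms(3) by (simp add: abs_mult)
  have [measurable]: "G \<in> borel_measurable M" using distributed_measurable[of M lborel G] v by auto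
  have "(\<integral>\<^sup>+x. exp (\<theta> * ((G x)\<^sup>2 - v)) \<partial>M) = (\<integral>\<^sup>+x. exp (- (\<theta> * v)) * ennreal (exp (\<theta> * (G x)\<^sup>2)) \<partial>M)"
    by (intro nn_integral_cong) (simp add: ennreal_mult[symmetric] exp_add[symmetric] algebra_simps)
  also have "\<dots> = exp (- (\<theta> * v)) * (\<integral>\<^sup>+x. exp (\<theta> * (G x)\<^sup>2) \<partial>M)"
    by (rule nn_integral_cmult) simp
  also have "(\<integral>\<^sup>+x. exp (\<theta> * (G x)\<^sup>2) \<partial>M) = 1 / sqrt (1 - 2 * (\<theta> * v))"
    using v u nn_integral_exp_square_normal[of M G "sqrt v" \<theta>] by (simp add: mult.assoc)
  also have "ennreal (exp (- (\<theta> * v))) * ennreal (1 / sqrt (1 - 2 * (\<theta> * v)))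
      = exp (- (\<theta> * v)) / sqrt (1 - 2 * (\<theta> * v))"
    using u by (simp add: ennreal_mult[symmetric])
  also have "\<dots> \<le> exp (4 * (\<theta> * v)\<^sup>2)"
    using exp_neg_div_sqrt_le[OF u] by (intro ennreal_leI)
  finally show ?thesis by (simp add: power_mult_distrib mult.assoc)
qed

lemma exp_midpoint_le: "exp ((a + b) / 2) \<le> (exp a + exp b) / (2::real)"
  using convex_onD[OF exp_convex, of "1/2" a b] by (simp add: add_divide_distrib)

lemma nn_integral_exp_midpoint_le:
  assumes [measurable]: "f \<in> borel_measurable M" "g \<in> borel_measurable M"
    and "(\<integral>\<^sup>+x. exp (f x) \<partial>M) \<le> B" "(\<integral>\<^sup>+x. exp (g x) \<partial>M) \<le> B"
  shows "(\<integral>\<^sup>+x. exp ((f x + g x) / 2) \<partial>M) \<le> B"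
proof -
  have "(\<integral>\<^sup>+x. exp ((f x + g x) / 2) \<partial>M) \<le> (\<integral>\<^sup>+x. 1/2 * (exp (f x) + exp (g x)) \<partial>M)"
    using exp_midpoint_le by (intro nn_integral_mono ennreal_leI) simp
  also have "\<dots> = (\<integral>\<^sup>+x. ennreal (1/2) * (ennreal (exp (f x)) + ennreal (exp (g x))) \<partial>M)"
    by (simp only: ennreal_mult' ennreal_plus exp_ge_zero)
  also have "\<dots> = ennreal (1/2) * ((\<integral>\<^sup>+x. exp (f x) \<partial>M) + (\<integral>\<^sup>+x. exp (g x) \<partial>M))"
    by (simp add: nn_integral_cmult nn_integral_add)
  also have "\<dots> \<le> ennreal (1/2) * (B + B)"
    using assms(3,4) by (intro mult_left_mono add_mono) auto
  also have "\<dots> = B"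
    by (simp only: mult_2[symmetric] mult.assoc[symmetric] ennreal_numeral[symmetric] ennreal_mult[symmetric]) simp
  finally show ?thesis .
qed

lemma sum_mult_axis: "(\<Sum>j\<in>UNIV. f j * axis r b $ j) = f r * (b::'a::semiring_1)"
  by (simp add: axis_def if_distrib[of "(*) _"] cong: if_cong)

lemma sum_axis_mult: "(\<Sum>j\<in>UNIV. axis r b $ j * f j) = (b::'a::semiring_1) * f r"
  by (simp add: axis_def if_distrib[of "\<lambda>x. x * _"] cong: if_cong)

lemma cnj_axis_nth: "cnj (axis q a $ i) = axis q (cnj a) $ i"
  by (simp add: axis_def)

definition herm_dot :: "complex^'p \<Rightarrow> complex^'p \<Rightarrow> complex" where
  "herm_dot c x = (\<Sum>j\<in>UNIV. cnj (c$j) * x$j)"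

definition herm_sesq :: "complex^'p^'p \<Rightarrow> complex^'p \<Rightarrow> complex^'p \<Rightarrow> complex" where
  "herm_sesq S a b = (\<Sum>i\<in>UNIV. \<Sum>j\<in>UNIV. cnj (a$i) * S$i$j * b$j)"

lemma herm_quad_eq_herm_sesq: "herm_quad S c = herm_sesq S c c"
  unfolding herm_quad_def herm_sesq_def ..

lemma herm_sesq_add_left: "herm_sesq S (a + b) c = herm_sesq S a c + herm_sesq S b c"
  unfolding herm_sesq_def by (simp add: sum.distrib[symmetric] algebra_simps)

lemma herm_sesq_add_right: "herm_sesq S c (a + b) = herm_sesq S c a + herm_sesq S c b"
  unfolding herm_sesq_def by (simp add: sum.distrib[symmetric] algebra_simps)

lemma herm_sesq_diff_left: "herm_sesq S (a - b) c = herm_sesq S a c - herm_sesq S b c"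
  unfolding herm_sesq_def by (simp add: sum_subtractf[symmetric] algebra_simps)

lemma herm_sesq_diff_right: "herm_sesq S c (a - b) = herm_sesq S c a - herm_sesq S c b"
  unfolding herm_sesq_def by (simp add: sum_subtractf[symmetric] algebra_simps)

lemma herm_quad_parallelogram:
  "herm_quad S (a + b) + herm_quad S (a - b) = 2 * (herm_quad S a + herm_quad S b)"
  unfolding herm_quad_eq_herm_sesq herm_sesq_add_left herm_sesq_add_right
    herm_sesq_diff_left herm_sesq_diff_right by simp

lemma herm_quad_polarization:
  "herm_quad S (a + b) - herm_quad S (a - b) = 2 * (herm_sesq S a b + herm_sesq S b a)"
  unfolding herm_quad_eq_herm_sesq herm_sesq_add_left herm_sesq_add_right
    herm_sesq_diff_left herm_sesq_diff_right by simp

lemma herm_quad_i_scale: "herm_quad S (\<i> *s c) = herm_quad S c"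
  unfolding herm_quad_def by (intro sum.cong refl) (simp add: algebra_simps)

lemma herm_sesq_axis: "herm_sesq S (axis q a) (axis r b) = cnj a * S$q$r * b"
  unfolding herm_sesq_def sum_mult_axis cnj_axis_nth by (simp add: mult.assoc sum_axis_mult)

lemma herm_dot_axis: "herm_dot (axis q a) x = cnj a * x$q"
  unfolding herm_dot_def cnj_axis_nth sum_axis_mult ..

lemma herm_dot_add: "herm_dot (a + b) x = herm_dot a x + herm_dot b x"
  unfolding herm_dot_def by (simp add: sum.distrib[symmetric] algebra_simps)

lemma herm_dot_diff: "herm_dot (a - b) x = herm_dot a x - herm_dot b x"
  unfolding herm_dot_def by (simp add: sum_subtractf[symmetric] algebra_simps)

lemma herm_dot_i_scale: "herm_dot (\<i> *s c) x = - \<i> * herm_dot c x"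
  unfolding herm_dot_def by (simp add: sum_distrib_left algebra_simps)

lemma herm_quad_zero [simp]: "herm_quad S 0 = 0"
  by (simp add: herm_quad_def)

lemma hermitian_pd_herm_quad_nonneg: "hermitian_pd S \<Longrightarrow> Re (herm_quad S c) \<ge> 0"
  unfolding hermitian_pd_def by (cases "c = 0") (auto intro: less_imp_le)

lemma borel_measurable_vec_nth [measurable]:
  "(\<lambda>x::'a::topological_space^'n. x $ i) \<in> borel_measurable borel"
  by (intro borel_measurable_continuous_onI continuous_intros)

lemma circ_complex_gaussian_Re_herm_dot:
  assumes "circ_complex_gaussian M X S" "hermitian_pd S"
  shows "centered_gaussian M (\<lambda>x. Re (herm_dot c (X x))) (Re (herm_quad S c) / 2)"
proof (cases "c = 0")
  case True
  then show ?thesis by (simp add: centered_gaussian_def herm_dot_def)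
next
  case False
  then show ?thesis
    using assms unfolding centered_gaussian_def circ_complex_gaussian_def hermitian_pd_def herm_dot_def
    by auto
qed

lemma circ_complex_gaussian_Im_herm_dot:
  assumes "circ_complex_gaussian M X S" "hermitian_pd S"
  shows "centered_gaussian M (\<lambda>x. Im (herm_dot c (X x))) (Re (herm_quad S c) / 2)"
  using circ_complex_gaussian_Re_herm_dot[OF assms, of "\<i> *s c"]
  by (simp add: herm_dot_i_scale herm_quad_i_scale)

lemma circ_complex_gaussian_mgf_cmod_sq_le:
  assumes "prob_space M" "circ_complex_gaussian M X S" "hermitian_pd S"
    and "Re (herm_quad S c) \<le> v" "\<bar>\<theta>\<bar> * v \<le> 1/4"
  shows "(\<integral>\<^sup>+x. exp (\<theta> * ((cmod (herm_dot c (X x)))\<^sup>2 - Re (herm_quad S c))) \<partial>M)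
           \<le> exp (4 * \<theta>\<^sup>2 * v\<^sup>2)"
proof -
  define u where "u = Re (herm_quad S c) / 2"
  have "0 \<le> u" using hermitian_pd_herm_quad_nonneg[OF assms(3)] by (simp add: u_def)
  have [measurable]: "X \<in> borel_measurable M"
    using assms(2) unfolding circ_complex_gaussian_def by blast
  have "\<bar>\<theta>\<bar> * (2 * u) \<le> \<bar>\<theta>\<bar> * v" using assms(4) by (simp add: u_def mult_left_mono)
  then have "\<bar>2 * \<theta>\<bar> * u \<le> 1/4" using assms(5) by (simp add: abs_mult)
  then have bound: "(\<integral>\<^sup>+x. exp (((2 * \<theta>) * ((Re (herm_dot c (X x)))\<^sup>2 - u)
                          + (2 * \<theta>) * ((Im (herm_dot c (X x)))\<^sup>2 - u)) / 2) \<partial>M)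
             \<le> exp (4 * (2 * \<theta>)\<^sup>2 * u\<^sup>2)"
    using assms(1-3) unfolding u_def
    by (intro nn_integral_exp_midpoint_le centered_gaussian_mgf_square_le
          circ_complex_gaussian_Re_herm_dot circ_complex_gaussian_Im_herm_dot)
       (auto simp: herm_dot_def)
  have exponent: "((2 * \<theta>) * ((Re z)\<^sup>2 - u) + (2 * \<theta>) * ((Im z)\<^sup>2 - u)) / 2
      = \<theta> * ((cmod z)\<^sup>2 - Re (herm_quad S c))" for z
    by (simp add: u_def cmod_power2 field_simps)
  have "(2 * u)\<^sup>2 \<le> v\<^sup>2" using \<open>0 \<le> u\<close> assms(4) by (intro power_mono) (auto simp: u_def)
  then have "4 * \<theta>\<^sup>2 * (2 * u)\<^sup>2 \<le> 4 * \<theta>\<^sup>2 * v\<^sup>2" by (rule mult_left_mono) simp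
  then have "ennreal (exp (4 * (2 * \<theta>)\<^sup>2 * u\<^sup>2)) \<le> exp (4 * \<theta>\<^sup>2 * v\<^sup>2)"
    by (intro ennreal_leI) (simp add: power_mult_distrib)
  with bound show ?thesis unfolding exponent by (rule order.trans)
qed

lemma herm_dot_axis_sum: "herm_dot (axis q (cnj w) + axis r 1) y = w * y$q + y$r"
  and herm_dot_axis_diff: "herm_dot (axis q (cnj w) - axis r 1) y = w * y$q - y$r"
  by (simp_all add: herm_dot_add herm_dot_diff herm_dot_axis)

lemma Re_mult_cnj_polarization:
  "Re (u * cnj v) = ((cmod (u + v))\<^sup>2 - (cmod (u - v))\<^sup>2) / 4"
  unfolding cmod_power2 by (simp add: power2_eq_square algebra_simps)

lemma Re_herm_quad_axis_add_sum:
  assumes "cmod w = 1"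
  shows "Re (herm_quad S (axis q (cnj w) + axis r 1)) + Re (herm_quad S (axis q (cnj w) - axis r 1))
           = 2 * (Re (S$q$q) + Re (S$r$r))"
proof -
  have "herm_quad S (axis q (cnj w)) = S$q$q * (w * cnj w)"
    unfolding herm_quad_eq_herm_sesq herm_sesq_axis by (simp add: ac_simps)
  also have "w * cnj w = 1"
    using assms complex_norm_square[of w] by simp
  finally have "herm_quad S (axis q (cnj w)) = S$q$q" by simp
  moreover have "herm_quad S (axis r 1) = S$r$r"
    unfolding herm_quad_eq_herm_sesq herm_sesq_axis by simp
  ultimately show ?thesis
    using arg_cong[OF herm_quad_parallelogram[of S "axis q (cnj w)" "axis r 1"], of Re] by simp
qed

lemma Re_herm_quad_axis_add_diff:
  assumes "hermitian_pd S"
  shows "Re (herm_quad S (axis q (cnj w) + axis r 1)) - Re (herm_quad S (axis q (cnj w) - axis r 1))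
           = 4 * Re (w * S$q$r)"
proof -
  have "S$r$q = cnj (S$q$r)"
    using assms unfolding hermitian_pd_def by blast
  then show ?thesis
    using arg_cong[OF herm_quad_polarization[of S "axis q (cnj w)" "axis r 1"], of Re]
    unfolding herm_sesq_axis by simp
qed

lemma circ_complex_gaussian_mgf_cross_le:
  fixes X :: "'a \<Rightarrow> complex^'p"
  assumes "prob_space M" "circ_complex_gaussian M X S" "hermitian_pd S"
    and "cmod w = 1" "Re (S$q$q) \<le> \<sigma>" "Re (S$r$r) \<le> \<sigma>" "8 * \<bar>\<theta>\<bar> * \<sigma> \<le> 1"
  shows "(\<integral>\<^sup>+x. exp (\<theta> * (Re (w * (X x $ q * cnj (X x $ r))) - Re (w * S$q$r))) \<partial>M)
           \<le> exp (16 * \<theta>\<^sup>2 * \<sigma>\<^sup>2)"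
proof -
  define cp where "cp = axis q (cnj w) + axis r 1"
  define cm where "cm = axis q (cnj w) - axis r 1"
  define vp where "vp = Re (herm_quad S cp)"
  define vm where "vm = Re (herm_quad S cm)"
  have [measurable]: "X \<in> borel_measurable M"
    using assms(2) unfolding circ_complex_gaussian_def by blast
  have "0 \<le> vp" "0 \<le> vm"
    unfolding vp_def vm_def using hermitian_pd_herm_quad_nonneg[OF assms(3)] by auto
  moreover have "vp + vm = 2 * (Re (S$q$q) + Re (S$r$r))"
    unfolding vp_def vm_def cp_def cm_def by (rule Re_herm_quad_axis_add_sum[OF assms(4)])
  ultimately have "vp \<le> 4 * \<sigma>" "vm \<le> 4 * \<sigma>"
    using assms(5,6) by auto
  have mean: "Re (w * S$q$r) = (vp - vm) / 4"
    using Re_herm_quad_axis_add_diff[OF assms(3), of q w r] unfolding vp_def vm_def cp_def cm_def by simp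
  have half: "(\<integral>\<^sup>+x. exp (\<phi> * ((cmod (herm_dot c (X x)))\<^sup>2 - Re (herm_quad S c))) \<partial>M)
      \<le> exp (16 * \<theta>\<^sup>2 * \<sigma>\<^sup>2)"
    if "\<phi> = \<theta> / 2 \<or> \<phi> = - \<theta> / 2" "Re (herm_quad S c) \<le> 4 * \<sigma>" for \<phi> c
  proof -
    have "\<bar>\<phi>\<bar> * (4 * \<sigma>) \<le> 1/4" and "4 * \<phi>\<^sup>2 * (4 * \<sigma>)\<^sup>2 = 16 * \<theta>\<^sup>2 * \<sigma>\<^sup>2"
      using that(1) assms(7) by (auto simp: power2_eq_square algebra_simps)
    then show ?thesis
      using circ_complex_gaussian_mgf_cmod_sq_le[OF assms(1-3) that(2)] by metis
  qed
  have split: "\<theta> * (Re (w * (y $ q * cnj (y $ r))) - Re (w * S$q$r))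
      = ((\<theta> / 2) * ((cmod (herm_dot cp y))\<^sup>2 - vp) + (- \<theta> / 2) * ((cmod (herm_dot cm y))\<^sup>2 - vm)) / 2"
    for y
    unfolding cp_def cm_def herm_dot_axis_sum herm_dot_axis_diff mult.assoc[symmetric]
      Re_mult_cnj_polarization mean
    by (simp add: field_simps)
  have "(\<integral>\<^sup>+x. exp (((\<theta> / 2) * ((cmod (herm_dot cp (X x)))\<^sup>2 - vp)
           + (- \<theta> / 2) * ((cmod (herm_dot cm (X x)))\<^sup>2 - vm)) / 2) \<partial>M) \<le> exp (16 * \<theta>\<^sup>2 * \<sigma>\<^sup>2)"
    using \<open>vp \<le> 4 * \<sigma>\<close> \<open>vm \<le> 4 * \<sigma>\<close> unfolding vp_def vm_def
    by (intro nn_integral_exp_midpoint_le half) (auto simp: herm_dot_def)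
  then show ?thesis unfolding split .
qed

lemma (in prob_space) Chernoff_indep_sum:
  fixes Y :: "'i \<Rightarrow> 'a \<Rightarrow> real" and \<theta> c a :: real
  assumes "finite I" "indep_vars (\<lambda>_. borel) Y I" "\<theta> > 0"
    and "\<And>k. k \<in> I \<Longrightarrow> (\<integral>\<^sup>+x. exp (\<theta> * Y k x) \<partial>M) \<le> exp c"
  shows "prob {x \<in> space M. a \<le> (\<Sum>k\<in>I. Y k x)} \<le> exp (- \<theta> * a + card I * c)"
proof -
  have [measurable]: "Y k \<in> borel_measurable M" if "k \<in> I" for k
    using assms(2) that unfolding indep_vars_def by auto
  have "emeasure M {x \<in> space M. a \<le> (\<Sum>k\<in>I. Y k x)}
      \<le> exp (- \<theta> * a) * (\<integral>\<^sup>+x. ennreal (exp (\<theta> * (\<Sum>k\<in>I. Y k x))) * indicator (space M) x \<partial>M)"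
    using assms(3) by (intro Chernoff_ineq_nn_integral_ge) measurable
  also have "(\<integral>\<^sup>+x. ennreal (exp (\<theta> * (\<Sum>k\<in>I. Y k x))) * indicator (space M) x \<partial>M)
      = (\<integral>\<^sup>+x. (\<Prod>k\<in>I. ennreal (exp (\<theta> * Y k x))) \<partial>M)"
    using assms(1) by (intro nn_integral_cong) (simp add: sum_distrib_left exp_sum prod_ennreal)
  also have "\<dots> = (\<Prod>k\<in>I. \<integral>\<^sup>+x. exp (\<theta> * Y k x) \<partial>M)"
    using assms(1) by (intro indep_vars_nn_integral indep_vars_compose2[OF assms(2)]) auto
  also have "\<dots> \<le> (\<Prod>k\<in>I. ennreal (exp c))"
    using assms(4) by (intro prod_mono_ennreal)
  also have "ennreal (exp (- \<theta> * a)) * (\<Prod>k\<in>I. ennreal (exp c)) = exp (- \<theta> * a + card I * c)"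
    by (simp add: ennreal_power ennreal_mult[symmetric] exp_diff exp_of_nat_mult[symmetric] exp_minus field_simps)
  finally show ?thesis
    by (simp add: mult_left_mono emeasure_eq_measure)
qed

lemma sum_Re_cross_eq_multitaper:
  "(\<Sum>k=1..m. Re (w * (d k $ q * cnj (d k $ r))) - Re (w * S$q$r))
     = real m * Re (w * (multitaper m d $ q $ r - S$q$r))"
proof (cases "m = 0")
  case False
  define T where "T = (\<Sum>k=1..m. d k $ q * cnj (d k $ r))"
  have "(\<Sum>k=1..m. Re (w * (d k $ q * cnj (d k $ r))) - Re (w * S$q$r))
      = Re (w * T) - real m * Re (w * S$q$r)"
    unfolding T_def by (simp add: sum_subtractf sum_distrib_left)
  also have "Re (w * T) = real m * Re (w * (T / of_nat m))"
    using False by (simp add: Re_divide_of_nat)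
  finally show ?thesis
    unfolding multitaper_def vec_lambda_beta T_def[symmetric] by (simp only: right_diff_distrib minus_complex.sel)
qed simp

lemma borel_measurable_multitaper_nth:
  fixes d :: "nat \<Rightarrow> 'a \<Rightarrow> complex^'p"
  assumes "\<And>k. k \<in> {1..m} \<Longrightarrow> d k \<in> borel_measurable M"
  shows "(\<lambda>x. multitaper m (\<lambda>k. d k x) $ q $ r) \<in> borel_measurable M"
proof -
  have cross: "(\<lambda>v::complex^'p. v $ q * cnj (v $ r)) \<in> borel_measurable borel"
    by (intro borel_measurable_continuous_onI continuous_intros)
  have "(\<lambda>x. d k x $ q * cnj (d k x $ r)) \<in> borel_measurable M" if "k \<in> {1..m}" for k
    using measurable_compose[OF assms[OF that] cross] by simp
  then show ?thesis
    unfolding multitaper_def vec_lambda_beta by (intro borel_measurable_divide borel_measurable_sum) auto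
qed

lemma multitaper_direction_tail:
  fixes d :: "nat \<Rightarrow> 'a \<Rightarrow> complex^'p"
  assumes "prob_space M" "m \<ge> 1" "hermitian_pd S"
    and "prob_space.indep_vars M (\<lambda>_. borel) d {1..m}"
    and "\<forall>k\<in>{1..m}. circ_complex_gaussian M (d k) S"
    and "cmod w = 1" "Re (S$q$q) \<le> \<sigma>" "Re (S$r$r) \<le> \<sigma>" "\<theta> > 0" "8 * \<theta> * \<sigma> \<le> 1"
  shows "measure M {x \<in> space M. t \<le> Re (w * (multitaper m (\<lambda>k. d k x) $ q $ r - S$q$r))}
           \<le> exp (- real m * (\<theta> * t - 16 * \<theta>\<^sup>2 * \<sigma>\<^sup>2))"
proof -
  interpret prob_space M by fact
  define f where "f v = Re (w * (v $ q * cnj (v $ r))) - Re (w * S$q$r)" for v :: "complex^'p"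
  have f_measurable: "f \<in> borel_measurable borel"
    unfolding f_def by (intro borel_measurable_continuous_onI continuous_intros)
  have "{x \<in> space M. t \<le> Re (w * (multitaper m (\<lambda>k. d k x) $ q $ r - S$q$r))}
      = {x \<in> space M. real m * t \<le> (\<Sum>k\<in>{1..m}. f (d k x))}"
    using assms(2) sum_Re_cross_eq_multitaper[of w "\<lambda>k. d k _" q r S m] by (auto simp: f_def)
  also have "prob \<dots> \<le> exp (- \<theta> * (real m * t) + card {1..m} * (16 * \<theta>\<^sup>2 * \<sigma>\<^sup>2))"
  proof (rule Chernoff_indep_sum)
    show "indep_vars (\<lambda>_. borel) (\<lambda>k x. f (d k x)) {1..m}"
      using f_measurable by (intro indep_vars_compose2[OF assms(4)]) auto
    show "(\<integral>\<^sup>+x. exp (\<theta> * f (d k x)) \<partial>M) \<le> exp (16 * \<theta>\<^sup>2 * \<sigma>\<^sup>2)" if "k \<in> {1..m}" for k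
      unfolding f_def using assms(5-10) that
      by (intro circ_complex_gaussian_mgf_cross_le[OF assms(1) _ assms(3)]) auto
  qed (use assms(9) in auto)
  finally show ?thesis by (simp add: algebra_simps)
qed

lemma (in prob_space) prob_cmod_ge_le_sum_rotations:
  fixes Z :: "'a \<Rightarrow> complex"
  assumes [measurable]: "Z \<in> borel_measurable M"
  shows "prob {x \<in> space M. \<delta> \<le> cmod (Z x)}
           \<le> (\<Sum>w\<in>{1, -1, \<i>, -\<i>}. prob {x \<in> space M. \<delta> / 2 \<le> Re (w * Z x)})"
proof -
  have "\<exists>w\<in>{1, -1, \<i>, -\<i>}. \<delta> / 2 \<le> Re (w * z)" if "\<delta> \<le> cmod z" for z
  proof -
    have "\<delta> / 2 \<le> \<bar>Re z\<bar> \<or> \<delta> / 2 \<le> \<bar>Im z\<bar>"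
      using cmod_le[of z] that by linarith
    then show ?thesis by (auto simp: abs_real_def split: if_splits)
  qed
  then have "{x \<in> space M. \<delta> \<le> cmod (Z x)}
      \<subseteq> (\<Union>w\<in>{1, -1, \<i>, -\<i>}. {x \<in> space M. \<delta> / 2 \<le> Re (w * Z x)})"
    by blast
  then have "prob {x \<in> space M. \<delta> \<le> cmod (Z x)}
      \<le> prob (\<Union>w\<in>{1, -1, \<i>, -\<i>}. {x \<in> space M. \<delta> / 2 \<le> Re (w * Z x)})"
    by (intro finite_measure_mono) auto
  also have "\<dots> \<le> (\<Sum>w\<in>{1, -1, \<i>, -\<i>}. prob {x \<in> space M. \<delta> / 2 \<le> Re (w * Z x)})"
    by (intro finite_measure_subadditive_finite) auto
  finally show ?thesis .
qed

lemma multitaper_direction_tail_quadratic: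
  fixes d :: "nat \<Rightarrow> 'a \<Rightarrow> complex^'p"
  assumes "prob_space M" "m \<ge> 1" "hermitian_pd S"
    and "prob_space.indep_vars M (\<lambda>_. borel) d {1..m}"
    and "\<forall>k\<in>{1..m}. circ_complex_gaussian M (d k) S"
    and "cmod w = 1" "Re (S$q$q) \<le> \<sigma>" "Re (S$r$r) \<le> \<sigma>" "0 < \<delta>" "\<delta> < 80 * \<sigma>"
  shows "measure M {x \<in> space M. \<delta> / 2 \<le> Re (w * (multitaper m (\<lambda>k. d k x) $ q $ r - S$q$r))}
           \<le> exp (- (real m * \<delta>^2) / (2^9 * 5^2 * \<sigma>^2))"
proof -
  have "0 < \<sigma>" using assms(9,10) by linarith
  define \<theta> where "\<theta> = \<delta> / (640 * \<sigma>\<^sup>2)"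
  have "0 < \<theta>" "8 * \<theta> * \<sigma> \<le> 1"
    using \<open>0 < \<sigma>\<close> assms(9,10) unfolding \<theta>_def by (simp_all add: power2_eq_square field_simps)
  have rate: "\<theta> * (\<delta> / 2) - 16 * \<theta>\<^sup>2 * \<sigma>\<^sup>2 = (19 / 25600) * (\<delta>\<^sup>2 / \<sigma>\<^sup>2)"
    using \<open>0 < \<sigma>\<close> unfolding \<theta>_def by (simp add: power2_eq_square field_simps)
  have "measure M {x \<in> space M. \<delta> / 2 \<le> Re (w * (multitaper m (\<lambda>k. d k x) $ q $ r - S$q$r))}
      \<le> exp (- real m * ((19 / 25600) * (\<delta>\<^sup>2 / \<sigma>\<^sup>2)))"
    using multitaper_direction_tail[OF assms(1-8) \<open>0 < \<theta>\<close> \<open>8 * \<theta> * \<sigma> \<le> 1\<close>, of "\<delta> / 2"]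
    unfolding rate .
  also have "\<dots> \<le> exp (- real m * ((1 / 12800) * (\<delta>\<^sup>2 / \<sigma>\<^sup>2)))"
  proof -
    have "(1 / 12800) * (\<delta>\<^sup>2 / \<sigma>\<^sup>2) \<le> (19 / 25600) * (\<delta>\<^sup>2 / \<sigma>\<^sup>2)"
      by (intro mult_right_mono) auto
    from mult_left_mono[OF this, of "real m"] show ?thesis by simp
  qed
  finally show ?thesis by simp
qed

theorem proposition1:
  fixes M :: "'a measure" and S :: "complex^'p^'p" and d :: "nat \<Rightarrow> 'a \<Rightarrow> complex^'p"
    and m :: nat and q r :: 'p and \<delta> :: real
  assumes "prob_space M"
    and "m \<ge> 1"
    and "hermitian_pd S"
    and "prob_space.indep_vars M (\<lambda>_. borel) d {1..m}"
    and "\<forall>k\<in>{1..m}. circ_complex_gaussian M (d k) S"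
    and "0 < \<delta>"
    and "\<delta> < 80 * (MAX q'. Re (S$q'$q'))"
  shows "measure M {x \<in> space M. cmod (multitaper m (\<lambda>k. d k x) $ q $ r - S $ q $ r) \<ge> \<delta>}
           \<le> 8 * exp (- (real m * \<delta>^2) / (2^9 * 5^2 * (MAX q'. Re (S$q'$q'))^2))"
proof -
  interpret prob_space M by fact
  define \<sigma> where "\<sigma> = (MAX q'. Re (S$q'$q'))"
  define Z where "Z x = multitaper m (\<lambda>k. d k x) $ q $ r - S$q$r" for x
  define E where "E = exp (- (real m * \<delta>^2) / (2^9 * 5^2 * \<sigma>^2))"
  have \<sigma>_ge: "Re (S$q$q) \<le> \<sigma>" "Re (S$r$r) \<le> \<sigma>"
    unfolding \<sigma>_def by (auto intro: Max_ge)
  have tail: "prob {x \<in> space M. \<delta> / 2 \<le> Re (w * Z x)} \<le> E" if "w \<in> {1, -1, \<i>, -\<i>}" for w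
  proof -
    have "cmod w = 1" using that by auto
    from multitaper_direction_tail_quadratic[OF assms(1-5) this \<sigma>_ge assms(6) assms(7)[folded \<sigma>_def]]
    show ?thesis unfolding Z_def E_def .
  qed
  have "Z \<in> borel_measurable M"
    using assms(5) unfolding Z_def circ_complex_gaussian_def
    by (intro borel_measurable_diff borel_measurable_multitaper_nth) auto
  then have "prob {x \<in> space M. \<delta> \<le> cmod (Z x)}
      \<le> (\<Sum>w\<in>{1, -1, \<i>, -\<i>}. prob {x \<in> space M. \<delta> / 2 \<le> Re (w * Z x)})"
    by (rule prob_cmod_ge_le_sum_rotations)
  also have "\<dots> \<le> (\<Sum>w\<in>{1, -1, \<i>, -\<i>}. E)"
    by (rule sum_mono) (rule tail)
  also have "\<dots> \<le> 8 * E"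
    by (simp add: complex_eq_iff E_def)
  finally show ?thesis unfolding Z_def E_def \<sigma>_def .
qed

end
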